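(* Let $K$ be a $b$-complete idempotent semiring, $X$ a nonempty set, and $V$ a $b$-complete functional semimodule on $X$. Then $V$ is a functional $b$-semimodule on $X$ (i.e., a $b$-subsemimodule of $K(X)$) if and only if every integral operator $A\colon V\to W$, for every $b$-complete semimodule $W$ over $K$, is $b$-linear.
   Context: Idempotent semigroup: commutative, associative, idempotent $\oplus$ with order $x\preceq y$ iff $x\oplus y=y$; $\oplus X$ least upper bound; $b$-complete: every bounded above subset (incl. $\emptyset$) has a least upper bound. A homomorphism of $b$-complete semigroups is a $b$-homomorphism if it preserves least upper bounds of bounded above subsets. Idempotent semiring: idempotent commutative associative $\oplus$, associative $\odot$ bi-distributive, unit $\mathbf 1$, zero $\mathbf 0$; $b$-complete if $b$-complete and $k\odot(\oplus X)=\oplus(k\odot X)$, $(\oplus X)\odot k=\oplus(X\odot k)$ for bounded $X$. Idempotent semimodule over $K$: idempotent semigroup with associative bi-distributive $K$-action, $\mathbf 1\odot x=x$, $\mathbf 0\odot x=\mathbf 0$; $b$-complete if $b$-complete as semigroup and $(\oplus Q)\odot x=\oplus(Q\odot x)$, $k\odot(\oplus X)=\oplus(k\odot X)$ for bounded $Q,X$. A map is linear if it preserves $\oplus$ and scalar multiplication; $b$-linear if moreover a $b$-homomorphism. A subsemimodule is a subset closed under $\oplus$ and scalar multiplication; a subsemimodule of a $b$-complete semimodule is a $b$-subsemimodule if the embedding is a $b$-homomorphism. If $W$ is $b$-complete and $V\subset W$ is closed under scalar multiplication and an upper semilattice in the induced order, $V$ is a quasisubsemimodule if it is a semimodule under $x\oplus_V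 y=$ least upper bound of $\{x,y\}$ in $V$. $K(X)$: all maps $X\to K$, pointwise operations. A functional semimodule on $X$ is a quasisubsemimodule of $K(X)$; $b$-complete if it is a $b$-complete semimodule; a functional $b$-semimodule if it is a $b$-subsemimodule of $K(X)$. A mapping $A\colon V\to W$ is an integral operator if there is a map $k\colon X\to W$ (kernel) such that for every $f\in V$ the set $\{f(x)\odot k(x)\mid x\in X\}$ is bounded in $W$ and $Af=\sup_{x\in X}(f(x)\odot k(x))$. *)

theory Defs
  imports Main
begin

definition lep :: "('a \<Rightarrow> 'a \<Rightarrow> 'a) \<Rightarrow> 'a \<Rightarrow> 'a \<Rightarrow> bool" where
  "lep p x y \<longleftrightarrow> p x y = y"

definition is_lub :: "'a set \<Rightarrow> ('a \<Rightarrow> 'a \<Rightarrow> 'a) \<Rightarrow> 'a set \<Rightarrow> 'a \<Rightarrow> bool" where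
  "is_lub S p A u \<longleftrightarrow> u \<in> S \<and> (\<forall>a\<in>A. lep p a u) \<and>
     (\<forall>v\<in>S. (\<forall>a\<in>A. lep p a v) \<longrightarrow> lep p u v)"

definition bdd :: "'a set \<Rightarrow> ('a \<Rightarrow> 'a \<Rightarrow> 'a) \<Rightarrow> 'a set \<Rightarrow> bool" where
  "bdd S p A \<longleftrightarrow> (\<exists>v\<in>S. \<forall>a\<in>A. lep p a v)"

definition b_complete :: "'a set \<Rightarrow> ('a \<Rightarrow> 'a \<Rightarrow> 'a) \<Rightarrow> bool" where
  "b_complete S p \<longleftrightarrow> (\<forall>A. A \<subseteq> S \<longrightarrow> bdd S p A \<longrightarrow> (\<exists>u. is_lub S p A u))"

definition idem_sg :: "'a set \<Rightarrow> ('a \<Rightarrow> 'a \<Rightarrow> 'a) \<Rightarrow> bool" where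
  "idem_sg S p \<longleftrightarrow> (\<forall>x\<in>S. \<forall>y\<in>S. p x y \<in> S) \<and>
     (\<forall>x\<in>S. \<forall>y\<in>S. p x y = p y x) \<and>
     (\<forall>x\<in>S. \<forall>y\<in>S. \<forall>z\<in>S. p (p x y) z = p x (p y z)) \<and>
     (\<forall>x\<in>S. p x x = x)"

section \<open>Idempotent semirings (carrier = the whole type 'k)\<close>

definition idem_semiring :: "('k \<Rightarrow> 'k \<Rightarrow> 'k) \<Rightarrow> ('k \<Rightarrow> 'k \<Rightarrow> 'k) \<Rightarrow> 'k \<Rightarrow> 'k \<Rightarrow> bool" where
  "idem_semiring pl ml zK oK \<longleftrightarrow> idem_sg UNIV pl \<and>
     (\<forall>x y z. ml (ml x y) z = ml x (ml y z)) \<and>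
     (\<forall>x y z. ml x (pl y z) = pl (ml x y) (ml x z)) \<and>
     (\<forall>x y z. ml (pl x y) z = pl (ml x z) (ml y z)) \<and>
     (\<forall>x. ml oK x = x \<and> ml x oK = x) \<and>
     (\<forall>x. pl x zK = x \<and> ml zK x = zK \<and> ml x zK = zK)"

definition b_complete_semiring :: "('k \<Rightarrow> 'k \<Rightarrow> 'k) \<Rightarrow> ('k \<Rightarrow> 'k \<Rightarrow> 'k) \<Rightarrow> 'k \<Rightarrow> 'k \<Rightarrow> bool" where
  "b_complete_semiring pl ml zK oK \<longleftrightarrow> idem_semiring pl ml zK oK \<and> b_complete UNIV pl \<and>
     (\<forall>A u k. bdd UNIV pl A \<longrightarrow> is_lub UNIV pl A u \<longrightarrow>
        is_lub UNIV pl (ml k ` A) (ml k u) \<and> is_lub UNIV pl ((\<lambda>a. ml a k) ` A) (ml u k))"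

section \<open>Idempotent semimodules over K (carrier W, addition wp, action sm, zero wz)\<close>

definition semimodule ::
  "('k \<Rightarrow> 'k \<Rightarrow> 'k) \<Rightarrow> ('k \<Rightarrow> 'k \<Rightarrow> 'k) \<Rightarrow> 'k \<Rightarrow> 'k \<Rightarrow>
   'w set \<Rightarrow> ('w \<Rightarrow> 'w \<Rightarrow> 'w) \<Rightarrow> ('k \<Rightarrow> 'w \<Rightarrow> 'w) \<Rightarrow> 'w \<Rightarrow> bool" where
  "semimodule pl ml zK oK W wp sm wz \<longleftrightarrow> idem_sg W wp \<and> wz \<in> W \<and>
     (\<forall>x\<in>W. wp x wz = x) \<and>
     (\<forall>c. \<forall>x\<in>W. sm c x \<in> W) \<and>
     (\<forall>c d. \<forall>x\<in>W. sm (ml c d) x = sm c (sm d x)) \<and>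
     (\<forall>c. \<forall>x\<in>W. \<forall>y\<in>W. sm c (wp x y) = wp (sm c x) (sm c y)) \<and>
     (\<forall>c d. \<forall>x\<in>W. sm (pl c d) x = wp (sm c x) (sm d x)) \<and>
     (\<forall>x\<in>W. sm oK x = x) \<and>
     (\<forall>x\<in>W. sm zK x = wz)"

definition b_complete_semimodule ::
  "('k \<Rightarrow> 'k \<Rightarrow> 'k) \<Rightarrow> ('k \<Rightarrow> 'k \<Rightarrow> 'k) \<Rightarrow> 'k \<Rightarrow> 'k \<Rightarrow>
   'w set \<Rightarrow> ('w \<Rightarrow> 'w \<Rightarrow> 'w) \<Rightarrow> ('k \<Rightarrow> 'w \<Rightarrow> 'w) \<Rightarrow> 'w \<Rightarrow> bool" where
  "b_complete_semimodule pl ml zK oK W wp sm wz \<longleftrightarrow>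
     semimodule pl ml zK oK W wp sm wz \<and> b_complete W wp \<and>
     (\<forall>Q u. \<forall>x\<in>W. bdd UNIV pl Q \<longrightarrow> is_lub UNIV pl Q u \<longrightarrow>
        is_lub W wp ((\<lambda>q. sm q x) ` Q) (sm u x)) \<and>
     (\<forall>A u c. A \<subseteq> W \<longrightarrow> bdd W wp A \<longrightarrow> is_lub W wp A u \<longrightarrow>
        is_lub W wp (sm c ` A) (sm c u))"

section \<open>The function semimodule K(X) (X = the whole type 'x) and functional semimodules\<close>

definition fplus :: "('k \<Rightarrow> 'k \<Rightarrow> 'k) \<Rightarrow> ('x \<Rightarrow> 'k) \<Rightarrow> ('x \<Rightarrow> 'k) \<Rightarrow> ('x \<Rightarrow> 'k)" where
  "fplus pl f g = (\<lambda>x. pl (f x) (g x))"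

definition fsm :: "('k \<Rightarrow> 'k \<Rightarrow> 'k) \<Rightarrow> 'k \<Rightarrow> ('x \<Rightarrow> 'k) \<Rightarrow> ('x \<Rightarrow> 'k)" where
  "fsm ml c f = (\<lambda>x. ml c (f x))"

definition fzero :: "'k \<Rightarrow> ('x \<Rightarrow> 'k)" where
  "fzero zK = (\<lambda>x. zK)"

definition vplus :: "('k \<Rightarrow> 'k \<Rightarrow> 'k) \<Rightarrow> ('x \<Rightarrow> 'k) set \<Rightarrow> ('x \<Rightarrow> 'k) \<Rightarrow> ('x \<Rightarrow> 'k) \<Rightarrow> ('x \<Rightarrow> 'k)" where
  "vplus pl V f g = (THE h. is_lub V (fplus pl) {f, g} h)"

text \<open>Functional semimodule = quasisubsemimodule of K(X).\<close>
definition functional_semimodule ::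
  "('k \<Rightarrow> 'k \<Rightarrow> 'k) \<Rightarrow> ('k \<Rightarrow> 'k \<Rightarrow> 'k) \<Rightarrow> 'k \<Rightarrow> 'k \<Rightarrow> ('x \<Rightarrow> 'k) set \<Rightarrow> bool" where
  "functional_semimodule pl ml zK oK V \<longleftrightarrow>
     (\<forall>c. \<forall>f\<in>V. fsm ml c f \<in> V) \<and>
     (\<forall>f\<in>V. \<forall>g\<in>V. \<exists>h. is_lub V (fplus pl) {f, g} h) \<and>
     semimodule pl ml zK oK V (vplus pl V) (fsm ml) (fzero zK)"

definition b_complete_functional_semimodule ::
  "('k \<Rightarrow> 'k \<Rightarrow> 'k) \<Rightarrow> ('k \<Rightarrow> 'k \<Rightarrow> 'k) \<Rightarrow> 'k \<Rightarrow> 'k \<Rightarrow> ('x \<Rightarrow> 'k) set \<Rightarrow> bool" where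
  "b_complete_functional_semimodule pl ml zK oK V \<longleftrightarrow>
     functional_semimodule pl ml zK oK V \<and>
     b_complete_semimodule pl ml zK oK V (vplus pl V) (fsm ml) (fzero zK)"

definition functional_b_semimodule ::
  "('k \<Rightarrow> 'k \<Rightarrow> 'k) \<Rightarrow> ('k \<Rightarrow> 'k \<Rightarrow> 'k) \<Rightarrow> 'k \<Rightarrow> 'k \<Rightarrow> ('x \<Rightarrow> 'k) set \<Rightarrow> bool" where
  "functional_b_semimodule pl ml zK oK V \<longleftrightarrow>
     (\<forall>f\<in>V. \<forall>g\<in>V. fplus pl f g \<in> V) \<and>
     (\<forall>c. \<forall>f\<in>V. fsm ml c f \<in> V) \<and>
     b_complete_semimodule pl ml zK oK V (fplus pl) (fsm ml) (fzero zK) \<and>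
     (\<forall>A u. A \<subseteq> V \<longrightarrow> bdd V (fplus pl) A \<longrightarrow> is_lub V (fplus pl) A u \<longrightarrow>
        is_lub UNIV (fplus pl) A u)"

definition integral_operator ::
  "('k \<Rightarrow> 'k \<Rightarrow> 'k) \<Rightarrow> ('k \<Rightarrow> 'k \<Rightarrow> 'k) \<Rightarrow> ('x \<Rightarrow> 'k) set \<Rightarrow>
   'w set \<Rightarrow> ('w \<Rightarrow> 'w \<Rightarrow> 'w) \<Rightarrow> ('k \<Rightarrow> 'w \<Rightarrow> 'w) \<Rightarrow> (('x \<Rightarrow> 'k) \<Rightarrow> 'w) \<Rightarrow> bool" where
  "integral_operator pl ml V W wp sm A \<longleftrightarrow>
     (\<exists>k. (\<forall>x. k x \<in> W) \<and>
        (\<forall>f\<in>V. bdd W wp (range (\<lambda>x. sm (f x) (k x))) \<and>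
                is_lub W wp (range (\<lambda>x. sm (f x) (k x))) (A f)))"

definition b_linear ::
  "'v set \<Rightarrow> ('v \<Rightarrow> 'v \<Rightarrow> 'v) \<Rightarrow> ('k \<Rightarrow> 'v \<Rightarrow> 'v) \<Rightarrow>
   'w set \<Rightarrow> ('w \<Rightarrow> 'w \<Rightarrow> 'w) \<Rightarrow> ('k \<Rightarrow> 'w \<Rightarrow> 'w) \<Rightarrow> ('v \<Rightarrow> 'w) \<Rightarrow> bool" where
  "b_linear V vp vsm W wp sm A \<longleftrightarrow>
     (\<forall>f\<in>V. A f \<in> W) \<and>
     (\<forall>f\<in>V. \<forall>g\<in>V. A (vp f g) = wp (A f) (A g)) \<and>
     (\<forall>c. \<forall>f\<in>V. A (vsm c f) = sm c (A f)) \<and>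
     (\<forall>S u. S \<subseteq> V \<longrightarrow> bdd V vp S \<longrightarrow> is_lub V vp S u \<longrightarrow> is_lub W wp (A ` S) (A u))"

end

theory Submission
  imports Defs
begin

(* Forward direction: if V is closed under pointwise addition then its addition is the
   pointwise one, and an integral operator  A f = sup_x f(x) k(x)  commutes with sums,
   scalars and bounded suprema, because sums, scalars and bounded suprema of functions in V
   are computed pointwise and the corresponding operations on W commute with suprema
   (lub_range_join, lub_interchange).
   Backward direction: every f in K(X) is the supremum of its "delta pieces" f(x) * delta_x,
   so the identity embedding of V into K(X) is an integral operator with kernel delta.
   Its b-linearity says exactly that the addition and the bounded suprema of V are the
   pointwise ones, i.e. that V is a b-subsemimodule of K(X). *)

section \<open>Order theory of idempotent semigroups\<close>

lemma idem_sgD: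
  assumes "idem_sg S p" "x \<in> S" "y \<in> S" "z \<in> S"
  shows "p x y \<in> S" "p x y = p y x" "p (p x y) z = p x (p y z)" "p x x = x"
  using assms unfolding idem_sg_def by blast+

lemma lep_trans:
  assumes sg: "idem_sg S p" and S: "x \<in> S" "y \<in> S" "z \<in> S"
    and xy: "lep p x y" and yz: "lep p y z"
  shows "lep p x z"
proof -
  have "p x z = p x (p y z)" using yz by (simp add: lep_def)
  also have "\<dots> = p (p x y) z" using idem_sgD(3)[OF sg S] by simp
  also have "\<dots> = z" using xy yz by (simp add: lep_def)
  finally show ?thesis by (simp add: lep_def)
qed

lemma lep_antisym:
  "idem_sg S p \<Longrightarrow> x \<in> S \<Longrightarrow> y \<in> S \<Longrightarrow> lep p x y \<Longrightarrow> lep p y x \<Longrightarrow> x = y"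
  unfolding lep_def by (metis idem_sgD(2))

lemma lep_join_upper1:
  assumes sg: "idem_sg S p" and S: "x \<in> S" "y \<in> S"
  shows "lep p x (p x y)"
proof -
  have "p x (p x y) = p (p x x) y" using idem_sgD(3)[OF sg S(1) S(1) S(2)] by simp
  then show ?thesis using idem_sgD(4)[OF sg S(1) S(1) S(1)] by (simp add: lep_def)
qed

lemma lep_join_upper2:
  assumes sg: "idem_sg S p" and S: "x \<in> S" "y \<in> S"
  shows "lep p y (p x y)"
  using lep_join_upper1[OF sg S(2) S(1)] idem_sgD(2)[OF sg S S(1)] by simp

lemma lep_join_least:
  assumes sg: "idem_sg S p" and S: "x \<in> S" "y \<in> S" "z \<in> S"
    and "lep p x z" "lep p y z"
  shows "lep p (p x y) z"
  using idem_sgD(3)[OF sg S] assms(5,6) by (simp add: lep_def)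

lemma lub_unique:
  assumes sg: "idem_sg T p" and "S \<subseteq> T" and "is_lub S p A u" "is_lub S p A u'"
  shows "u = u'"
proof -
  have "u \<in> T" "u' \<in> T" "lep p u u'" "lep p u' u"
    using assms(2-) unfolding is_lub_def by blast+
  then show ?thesis using lep_antisym[OF sg] by blast
qed

lemma lub_pair:
  assumes sg: "idem_sg S p" and S: "x \<in> S" "y \<in> S"
  shows "is_lub S p {x, y} (p x y)"
  unfolding is_lub_def
  using idem_sgD(1)[OF sg S S(1)] lep_join_upper1[OF sg S] lep_join_upper2[OF sg S]
    lep_join_least[OF sg S] by blast

lemma lub_restrict: "is_lub T p A u \<Longrightarrow> u \<in> S \<Longrightarrow> S \<subseteq> T \<Longrightarrow> is_lub S p A u"
  unfolding is_lub_def by blast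

text \<open>Suprema of families commute with the join: sup (a x + b x) = sup a + sup b.
  This is the additivity of integral operators.\<close>
lemma lub_range_join:
  assumes sg: "idem_sg W wp" and a: "\<And>x. a x \<in> W" and b: "\<And>x. b x \<in> W"
    and s: "is_lub W wp (range a) s" and t: "is_lub W wp (range b) t"
  shows "is_lub W wp (range (\<lambda>x. wp (a x) (b x))) (wp s t)"
proof -
  have sW: "s \<in> W" and tW: "t \<in> W" using s t by (auto simp: is_lub_def)
  have stW: "wp s t \<in> W" using idem_sgD(1)[OF sg sW tW sW] .
  have upper: "lep wp (wp (a x) (b x)) (wp s t)" for x
  proof -
    have "lep wp (a x) s" "lep wp (b x) t" using s t by (auto simp: is_lub_def)
    then have "lep wp (a x) (wp s t)" "lep wp (b x) (wp s t)"
      using lep_trans[OF sg] lep_join_upper1[OF sg sW tW] lep_join_upper2[OF sg sW tW]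
        a b sW tW stW by blast+
    then show ?thesis using lep_join_least[OF sg] a b stW by blast
  qed
  have least: "lep wp (wp s t) v"
    if vW: "v \<in> W" and vu: "\<forall>z\<in>range (\<lambda>x. wp (a x) (b x)). lep wp z v" for v
  proof -
    have "lep wp (a x) v \<and> lep wp (b x) v" for x
      using vu lep_trans[OF sg] lep_join_upper1[OF sg a b] lep_join_upper2[OF sg a b]
        a b idem_sgD(1)[OF sg a b a] vW by blast
    then have "lep wp s v" "lep wp t v" using s t vW by (auto simp: is_lub_def)
    then show ?thesis using lep_join_least[OF sg sW tW vW] by blast
  qed
  show ?thesis unfolding is_lub_def using stW upper least by blast
qed

text \<open>This is the b-continuity of integral operators.\<close>
lemma lub_interchange:
  assumes sg: "idem_sg W wp" and FW: "\<And>f x. F f x \<in> W"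
    and Af: "\<And>f. f \<in> S \<Longrightarrow> is_lub W wp (range (F f)) (A f)"
    and Au: "is_lub W wp (range (F u)) (A u)"
    and pointwise: "\<And>x. is_lub W wp ((\<lambda>f. F f x) ` S) (F u x)"
  shows "is_lub W wp (A ` S) (A u)"
proof -
  have AuW: "A u \<in> W" using Au by (auto simp: is_lub_def)
  have AfW: "f \<in> S \<Longrightarrow> A f \<in> W" for f using Af by (auto simp: is_lub_def)
  have upper: "lep wp (A f) (A u)" if fS: "f \<in> S" for f
  proof -
    have "lep wp (F f x) (F u x)" "lep wp (F u x) (A u)" for x
      using pointwise fS Au by (auto simp: is_lub_def)
    then have "lep wp (F f x) (A u)" for x using lep_trans[OF sg] FW AuW by blast
    then show ?thesis using Af[OF fS] AuW by (auto simp: is_lub_def)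
  qed
  have least: "lep wp (A u) v" if vW: "v \<in> W" and vu: "\<forall>z\<in>A ` S. lep wp z v" for v
  proof -
    have "lep wp (F f x) v" if fS: "f \<in> S" for f x
    proof -
      have "lep wp (F f x) (A f)" using Af[OF fS] by (auto simp: is_lub_def)
      moreover have "lep wp (A f) v" using vu fS by auto
      ultimately show ?thesis using lep_trans[OF sg] FW AfW[OF fS] vW by blast
    qed
    then have "lep wp (F u x) v" for x using pointwise vW by (auto simp: is_lub_def)
    then show ?thesis using Au vW by (auto simp: is_lub_def)
  qed
  show ?thesis unfolding is_lub_def using AuW upper least by blast
qed

section \<open>Changing the addition outside the carrier\<close>

text \<open>All order-theoretic and semimodule notions on a carrier W only depend on the values of
  the addition on W. This lets us pass between the least-upper-bound addition of a functional
  semimodule and the pointwise addition once the two agree on it.\<close>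

lemma lep_cong: "x \<in> W \<Longrightarrow> y \<in> W \<Longrightarrow> \<forall>x\<in>W. \<forall>y\<in>W. p x y = q x y \<Longrightarrow> lep p x y = lep q x y"
  by (simp add: lep_def)

lemma is_lub_cong:
  assumes "A \<subseteq> W" "\<forall>x\<in>W. \<forall>y\<in>W. p x y = q x y"
  shows "is_lub W p A u = is_lub W q A u"
  unfolding is_lub_def using assms lep_cong[of _ W _ p q] by (metis (no_types, lifting) subsetD)

lemma bdd_cong:
  assumes "A \<subseteq> W" "\<forall>x\<in>W. \<forall>y\<in>W. p x y = q x y"
  shows "bdd W p A = bdd W q A"
  unfolding bdd_def using assms lep_cong[of _ W _ p q] by (metis (no_types, lifting) subsetD)

lemma b_complete_cong: "\<forall>x\<in>W. \<forall>y\<in>W. p x y = q x y \<Longrightarrow> b_complete W p = b_complete W q"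
  unfolding b_complete_def using bdd_cong[of _ W p q] is_lub_cong[of _ W p q] by metis

lemma semimodule_cong:
  assumes e: "\<forall>x\<in>W. \<forall>y\<in>W. p x y = q x y" and S: "semimodule pl ml zK oK W p sm wz"
  shows "semimodule pl ml zK oK W q sm wz"
proof -
  have e': "\<And>x y. x \<in> W \<Longrightarrow> y \<in> W \<Longrightarrow> q x y = p x y" using e by simp
  have sg: "idem_sg W p" and cl: "\<And>c x. x \<in> W \<Longrightarrow> sm c x \<in> W" and w: "wz \<in> W"
    using S by (simp_all add: semimodule_def)
  have "idem_sg W q"
    unfolding idem_sg_def using idem_sgD[OF sg] by (simp add: e' idem_sgD(1)[OF sg])
  then show ?thesis using S unfolding semimodule_def by (simp add: e' cl w)
qed

lemma b_complete_semimodule_cong: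
  assumes e: "\<forall>x\<in>W. \<forall>y\<in>W. p x y = q x y"
    and B: "b_complete_semimodule pl ml zK oK W p sm wz"
  shows "b_complete_semimodule pl ml zK oK W q sm wz"
proof -
  have sm: "semimodule pl ml zK oK W p sm wz" and bc: "b_complete W p"
    and scalar_lub: "\<And>Q u x. x \<in> W \<Longrightarrow> bdd UNIV pl Q \<Longrightarrow> is_lub UNIV pl Q u \<Longrightarrow>
        is_lub W p ((\<lambda>q. sm q x) ` Q) (sm u x)"
    and vector_lub: "\<And>A u c. A \<subseteq> W \<Longrightarrow> bdd W p A \<Longrightarrow> is_lub W p A u \<Longrightarrow>
        is_lub W p (sm c ` A) (sm c u)"
    using B unfolding b_complete_semimodule_def by blast+
  have cl: "\<And>c x. x \<in> W \<Longrightarrow> sm c x \<in> W" using sm by (simp add: semimodule_def)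
  have "is_lub W q ((\<lambda>q. sm q x) ` Q) (sm u x)"
    if "x \<in> W" "bdd UNIV pl Q" "is_lub UNIV pl Q u" for Q u x
  proof -
    have "(\<lambda>q. sm q x) ` Q \<subseteq> W" using cl that(1) by blast
    then show ?thesis using scalar_lub[OF that] is_lub_cong[OF _ e] by blast
  qed
  moreover have "is_lub W q (sm c ` A) (sm c u)"
    if A: "A \<subseteq> W" "bdd W q A" "is_lub W q A u" for A u c
  proof -
    have "bdd W p A" "is_lub W p A u"
      using A bdd_cong[OF A(1) e] is_lub_cong[OF A(1) e] by blast+
    moreover have "sm c ` A \<subseteq> W" using cl A(1) by blast
    ultimately show ?thesis using vector_lub[OF A(1)] is_lub_cong[OF _ e] by blast
  qed
  ultimately show ?thesis
    unfolding b_complete_semimodule_def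
    using semimodule_cong[OF e sm] b_complete_cong[OF e] bc by blast
qed

section \<open>The b-complete semimodule K(X)\<close>

lemma idem_sg_fun: "idem_sg UNIV pl \<Longrightarrow> idem_sg UNIV (fplus pl)"
  unfolding idem_sg_def fplus_def by (auto simp: fun_eq_iff)

lemma lep_fun: "lep (fplus pl) f g \<longleftrightarrow> (\<forall>x. lep pl (f x) (g x))"
  unfolding lep_def fplus_def by (auto simp: fun_eq_iff)

lemma fun_lub_pointwise:
  assumes "is_lub UNIV (fplus pl) A u"
  shows "is_lub UNIV pl ((\<lambda>f. f x) ` A) (u x)"
proof -
  have upper: "\<forall>f\<in>A. lep (fplus pl) f u"
    and least: "\<And>v. \<forall>f\<in>A. lep (fplus pl) f v \<Longrightarrow> lep (fplus pl) u v"
    using assms by (auto simp: is_lub_def)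
  have "lep pl (u x) v" if "\<forall>a\<in>(\<lambda>f. f x) ` A. lep pl a v" for v
  proof -
    have "\<forall>f\<in>A. lep (fplus pl) f (u(x := v))" using upper that by (auto simp: lep_fun)
    then have "lep (fplus pl) u (u(x := v))" using least by blast
    then show ?thesis by (auto simp: lep_fun dest: spec[of _ x])
  qed
  then show ?thesis using upper by (auto simp: is_lub_def lep_fun)
qed

lemma fun_lub_of_pointwise:
  "(\<And>x. is_lub UNIV pl ((\<lambda>f. f x) ` A) (u x)) \<Longrightarrow> is_lub UNIV (fplus pl) A u"
  unfolding is_lub_def lep_fun by auto

lemma fun_bdd_pointwise: "bdd UNIV (fplus pl) A \<Longrightarrow> bdd UNIV pl ((\<lambda>f. f x) ` A)"
  unfolding bdd_def lep_fun by auto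

lemma fun_semimodule:
  assumes "idem_semiring pl ml zK oK"
  shows "semimodule pl ml zK oK UNIV (fplus pl) (fsm ml) (fzero zK :: 'x \<Rightarrow> 'k)"
proof -
  have sg: "idem_sg UNIV pl"
    and assoc: "\<And>x y z. ml (ml x y) z = ml x (ml y z)"
    and distrib_left: "\<And>x y z. ml x (pl y z) = pl (ml x y) (ml x z)"
    and distrib_right: "\<And>x y z. ml (pl x y) z = pl (ml x z) (ml y z)"
    and unit: "\<And>x. ml oK x = x" and zero: "\<And>x. pl x zK = x" "\<And>x. ml zK x = zK"
    using assms unfolding idem_semiring_def by blast+
  show ?thesis
    unfolding semimodule_def
    by (simp add: idem_sg_fun[OF sg] fun_eq_iff fplus_def fsm_def fzero_def
        assoc distrib_left distrib_right unit zero)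
qed

lemma fun_b_complete_semimodule:
  assumes K: "b_complete_semiring pl ml zK oK"
  shows "b_complete_semimodule pl ml zK oK UNIV (fplus pl) (fsm ml) (fzero zK :: 'x \<Rightarrow> 'k)"
proof -
  have IS: "idem_semiring pl ml zK oK" and BC: "b_complete UNIV pl"
    and lub_mult: "\<And>A u k. bdd UNIV pl A \<Longrightarrow> is_lub UNIV pl A u \<Longrightarrow>
        is_lub UNIV pl (ml k ` A) (ml k u) \<and> is_lub UNIV pl ((\<lambda>a. ml a k) ` A) (ml u k)"
    using K by (auto simp: b_complete_semiring_def)
  have "b_complete (UNIV :: ('x \<Rightarrow> 'k) set) (fplus pl)"
    unfolding b_complete_def
  proof (intro allI impI)
    fix A :: "('x \<Rightarrow> 'k) set" assume "bdd UNIV (fplus pl) A"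
    then have "bdd UNIV pl ((\<lambda>f. f x) ` A)" for x by (rule fun_bdd_pointwise)
    then have "\<forall>x. \<exists>u. is_lub UNIV pl ((\<lambda>f. f x) ` A) u"
      using BC unfolding b_complete_def by blast
    then obtain u where "\<forall>x. is_lub UNIV pl ((\<lambda>f. f x) ` A) (u x)" by metis
    then show "\<exists>u. is_lub UNIV (fplus pl) A u" using fun_lub_of_pointwise by blast
  qed
  moreover have "is_lub UNIV (fplus pl) ((\<lambda>q. fsm ml q f) ` Q) (fsm ml u f)"
    if "bdd UNIV pl Q" "is_lub UNIV pl Q u" for Q u and f :: "'x \<Rightarrow> 'k"
  proof (rule fun_lub_of_pointwise)
    fix y
    have "(\<lambda>g. g y) ` (\<lambda>q. fsm ml q f) ` Q = (\<lambda>a. ml a (f y)) ` Q"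
      by (auto simp: fsm_def)
    then show "is_lub UNIV pl ((\<lambda>g. g y) ` (\<lambda>q. fsm ml q f) ` Q) (fsm ml u f y)"
      using lub_mult[OF that] by (simp add: fsm_def)
  qed
  moreover have "is_lub UNIV (fplus pl) (fsm ml c ` A) (fsm ml c u)"
    if "bdd UNIV (fplus pl) A" "is_lub UNIV (fplus pl) A u" for u c and A :: "('x \<Rightarrow> 'k) set"
  proof (rule fun_lub_of_pointwise)
    fix y
    have "(\<lambda>g. g y) ` fsm ml c ` A = ml c ` (\<lambda>g. g y) ` A"
      by (auto simp: fsm_def)
    then show "is_lub UNIV pl ((\<lambda>g. g y) ` fsm ml c ` A) (fsm ml c u y)"
      using lub_mult[OF fun_bdd_pointwise[OF that(1)] fun_lub_pointwise[OF that(2)]]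
      by (simp add: fsm_def)
  qed
  ultimately show ?thesis
    unfolding b_complete_semimodule_def using fun_semimodule[OF IS] by blast
qed

lemma vplus_eq_fplus:
  assumes sg: "idem_sg UNIV pl" and V: "f \<in> V" "g \<in> V" "fplus pl f g \<in> V"
  shows "vplus pl V f g = fplus pl f g"
proof -
  have L: "is_lub V (fplus pl) {f, g} (fplus pl f g)"
    using lub_restrict[OF lub_pair[OF idem_sg_fun[OF sg]] V(3)] by simp
  show ?thesis
    unfolding vplus_def
  proof (rule the_equality)
    show "is_lub V (fplus pl) {f, g} (fplus pl f g)" by (rule L)
  next
    fix h assume "is_lub V (fplus pl) {f, g} h"
    then show "h = fplus pl f g" using lub_unique[OF idem_sg_fun[OF sg] subset_UNIV _ L] by blast
  qed
qed

section \<open>Integral operators on a functional b-semimodule are b-linear\<close>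

lemma integral_plus:
  assumes SMW: "semimodule pl ml zK oK W wp sm wz" and kW: "\<And>x. k x \<in> W"
    and a: "is_lub W wp (range (\<lambda>x. sm (f x) (k x))) a"
    and b: "is_lub W wp (range (\<lambda>x. sm (g x) (k x))) b"
  shows "is_lub W wp (range (\<lambda>x. sm (fplus pl f g x) (k x))) (wp a b)"
proof -
  have sg: "idem_sg W wp" and smW: "\<And>c x. x \<in> W \<Longrightarrow> sm c x \<in> W"
    and distrib: "\<And>c d x. x \<in> W \<Longrightarrow> sm (pl c d) x = wp (sm c x) (sm d x)"
    using SMW unfolding semimodule_def by blast+
  have "range (\<lambda>x. sm (fplus pl f g x) (k x)) = range (\<lambda>x. wp (sm (f x) (k x)) (sm (g x) (k x)))"
    by (simp add: fplus_def distrib kW)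
  then show ?thesis using lub_range_join[OF sg _ _ a b] smW kW by simp
qed

lemma integral_scalar:
  assumes BW: "b_complete_semimodule pl ml zK oK W wp sm wz" and kW: "\<And>x. k x \<in> W"
    and bdd: "bdd W wp (range (\<lambda>x. sm (f x) (k x)))"
    and a: "is_lub W wp (range (\<lambda>x. sm (f x) (k x))) a"
  shows "is_lub W wp (range (\<lambda>x. sm (fsm ml c f x) (k x))) (sm c a)"
proof -
  have SMW: "semimodule pl ml zK oK W wp sm wz"
    and vector_lub: "\<And>B u c. B \<subseteq> W \<Longrightarrow> bdd W wp B \<Longrightarrow> is_lub W wp B u \<Longrightarrow>
        is_lub W wp (sm c ` B) (sm c u)"
    using BW unfolding b_complete_semimodule_def by blast+
  have smW: "\<And>c x. x \<in> W \<Longrightarrow> sm c x \<in> W"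
    and assoc: "\<And>c d x. x \<in> W \<Longrightarrow> sm (ml c d) x = sm c (sm d x)"
    using SMW unfolding semimodule_def by blast+
  have "range (\<lambda>x. sm (f x) (k x)) \<subseteq> W" using smW kW by blast
  moreover have "range (\<lambda>x. sm (fsm ml c f x) (k x)) = sm c ` range (\<lambda>x. sm (f x) (k x))"
    by (simp add: fsm_def assoc kW image_image)
  ultimately show ?thesis using vector_lub[OF _ bdd a] by simp
qed

lemma integral_lub:
  assumes BW: "b_complete_semimodule pl ml zK oK W wp sm wz" and kW: "\<And>x. k x \<in> W"
    and I: "\<And>f. f \<in> S \<Longrightarrow> is_lub W wp (range (\<lambda>x. sm (f x) (k x))) (A f)"
    and Iu: "is_lub W wp (range (\<lambda>x. sm (u x) (k x))) (A u)"
    and u: "is_lub UNIV (fplus pl) S u"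
  shows "is_lub W wp (A ` S) (A u)"
proof -
  have SMW: "semimodule pl ml zK oK W wp sm wz"
    and scalar_lub: "\<And>Q u x. x \<in> W \<Longrightarrow> bdd UNIV pl Q \<Longrightarrow> is_lub UNIV pl Q u \<Longrightarrow>
        is_lub W wp ((\<lambda>q. sm q x) ` Q) (sm u x)"
    using BW unfolding b_complete_semimodule_def by blast+
  have sg: "idem_sg W wp" and smW: "\<And>c x. x \<in> W \<Longrightarrow> sm c x \<in> W"
    using SMW unfolding semimodule_def by blast+
  have "is_lub W wp ((\<lambda>f. sm (f x) (k x)) ` S) (sm (u x) (k x))" for x
  proof -
    have l: "is_lub UNIV pl ((\<lambda>f. f x) ` S) (u x)" using fun_lub_pointwise[OF u] .
    then have "bdd UNIV pl ((\<lambda>f. f x) ` S)" unfolding bdd_def is_lub_def by blast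
    from scalar_lub[OF kW this l] show ?thesis by (simp add: image_image)
  qed
  then show ?thesis
    using lub_interchange[OF sg, where F = "\<lambda>f x. sm (f x) (k x)"] smW kW I Iu by blast
qed

lemma integral_operator_b_linear:
  assumes K: "b_complete_semiring pl ml zK oK"
    and FB: "functional_b_semimodule pl ml zK oK V"
    and BW: "b_complete_semimodule pl ml zK oK W wp sm wz"
    and IO: "integral_operator pl ml V W wp sm A"
  shows "b_linear V (vplus pl V) (fsm ml) W wp sm A"
proof -
  have sg: "idem_sg UNIV pl" using K by (simp add: b_complete_semiring_def idem_semiring_def)
  have SMW: "semimodule pl ml zK oK W wp sm wz" using BW by (simp add: b_complete_semimodule_def)
  then have sgW: "idem_sg W wp" by (simp add: semimodule_def)
  have plusV: "\<And>f g. f \<in> V \<Longrightarrow> g \<in> V \<Longrightarrow> fplus pl f g \<in> V"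
    and scalarV: "\<And>c f. f \<in> V \<Longrightarrow> fsm ml c f \<in> V"
    and lubV: "\<And>S u. S \<subseteq> V \<Longrightarrow> bdd V (fplus pl) S \<Longrightarrow> is_lub V (fplus pl) S u \<Longrightarrow>
        is_lub UNIV (fplus pl) S u"
    using FB unfolding functional_b_semimodule_def by blast+
  have vplus: "\<forall>f\<in>V. \<forall>g\<in>V. vplus pl V f g = fplus pl f g"
    using vplus_eq_fplus[OF sg] plusV by blast
  obtain k where kW: "\<And>x. k x \<in> W"
    and bddA: "\<And>f. f \<in> V \<Longrightarrow> bdd W wp (range (\<lambda>x. sm (f x) (k x)))"
    and lubA: "\<And>f. f \<in> V \<Longrightarrow> is_lub W wp (range (\<lambda>x. sm (f x) (k x))) (A f)"
    using IO unfolding integral_operator_def by blast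
  have "A (vplus pl V f g) = wp (A f) (A g)" if "f \<in> V" "g \<in> V" for f g
    using lub_unique[OF sgW order_refl lubA integral_plus[OF SMW kW lubA lubA]] that plusV vplus
    by metis
  moreover have "A (fsm ml c f) = sm c (A f)" if "f \<in> V" for c f
    using lub_unique[OF sgW order_refl lubA integral_scalar[OF BW kW bddA lubA]] that scalarV
    by metis
  moreover have "is_lub W wp (A ` S) (A u)"
    if S: "S \<subseteq> V" "bdd V (vplus pl V) S" "is_lub V (vplus pl V) S u" for S u
  proof -
    have "is_lub UNIV (fplus pl) S u"
      using lubV S bdd_cong[OF S(1) vplus] is_lub_cong[OF S(1) vplus] by blast
    moreover have "u \<in> V" using S(3) by (simp add: is_lub_def)
    ultimately show ?thesis using integral_lub[OF BW kW lubA lubA] S(1) by blast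
  qed
  moreover have "\<forall>f\<in>V. A f \<in> W" using lubA by (auto simp: is_lub_def)
  ultimately show ?thesis unfolding b_linear_def by blast
qed

section \<open>The embedding of V into K(X) is an integral operator\<close>

definition delta :: "'k \<Rightarrow> 'k \<Rightarrow> 'x \<Rightarrow> 'x \<Rightarrow> 'k" where
  "delta zK oK x = (\<lambda>y. if y = x then oK else zK)"

lemma delta_decomposition:
  assumes IS: "idem_semiring pl ml zK oK"
  shows "is_lub UNIV (fplus pl) (range (\<lambda>x. fsm ml (f x) (delta zK oK x))) f"
proof (rule fun_lub_of_pointwise)
  fix y
  have unit: "\<And>a. ml a oK = a" and zero: "\<And>a. ml a zK = zK" "\<And>a. pl zK a = a"
    and idem: "\<And>a. pl a a = a"
    using IS unfolding idem_semiring_def idem_sg_def by (metis UNIV_I)+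
  have "(\<lambda>g. g y) ` range (\<lambda>x. fsm ml (f x) (delta zK oK x))
      = range (\<lambda>x. if y = x then f x else zK)"
    by (auto simp: fsm_def delta_def unit zero image_iff)
  moreover have "is_lub UNIV pl (range (\<lambda>x. if y = x then f x else zK)) (f y)"
    unfolding is_lub_def lep_def using zero(2) idem by (auto split: if_splits)
  ultimately show "is_lub UNIV pl ((\<lambda>g. g y) ` range (\<lambda>x. fsm ml (f x) (delta zK oK x))) (f y)"
    by simp
qed

lemma embedding_integral_operator:
  assumes "idem_semiring pl ml zK oK"
  shows "integral_operator pl ml V UNIV (fplus pl) (fsm ml) (\<lambda>f. f)"
  unfolding integral_operator_def
  using delta_decomposition[OF assms] unfolding bdd_def is_lub_def by blast

lemma functional_b_semimodule_if_embedding_b_linear: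
  assumes FV: "b_complete_functional_semimodule pl ml zK oK V"
    and BL: "b_linear V (vplus pl V) (fsm ml) UNIV (fplus pl) (fsm ml) (\<lambda>f. f)"
  shows "functional_b_semimodule pl ml zK oK V"
proof -
  have vplus: "\<forall>f\<in>V. \<forall>g\<in>V. vplus pl V f g = fplus pl f g"
    and lubV: "\<And>S u. S \<subseteq> V \<Longrightarrow> bdd V (vplus pl V) S \<Longrightarrow> is_lub V (vplus pl V) S u \<Longrightarrow>
        is_lub UNIV (fplus pl) S u"
    using BL unfolding b_linear_def by auto
  have scalarV: "\<forall>c. \<forall>f\<in>V. fsm ml c f \<in> V"
    and BV: "b_complete_semimodule pl ml zK oK V (vplus pl V) (fsm ml) (fzero zK)"
    and sgV: "idem_sg V (vplus pl V)"
    using FV unfolding b_complete_functional_semimodule_def functional_semimodule_def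
      semimodule_def by blast+
  have "\<forall>f\<in>V. \<forall>g\<in>V. fplus pl f g \<in> V" using idem_sgD(1)[OF sgV] vplus by metis
  moreover have "b_complete_semimodule pl ml zK oK V (fplus pl) (fsm ml) (fzero zK)"
    using b_complete_semimodule_cong[OF vplus BV] .
  moreover have "is_lub UNIV (fplus pl) S u"
    if "S \<subseteq> V" "bdd V (fplus pl) S" "is_lub V (fplus pl) S u" for S u
    using that lubV bdd_cong[OF that(1) vplus] is_lub_cong[OF that(1) vplus] by blast
  ultimately show ?thesis unfolding functional_b_semimodule_def using scalarV by blast
qed

theorem proposition7p21:
  fixes pl ml :: "'k \<Rightarrow> 'k \<Rightarrow> 'k" and zK oK :: 'k
    and V :: "('x \<Rightarrow> 'k) set"
  assumes "b_complete_semiring pl ml zK oK"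
    and "b_complete_functional_semimodule pl ml zK oK V"
  shows "(functional_b_semimodule pl ml zK oK V \<longrightarrow>
           (\<forall>(W :: 'w set) wp sm wz (A :: ('x \<Rightarrow> 'k) \<Rightarrow> 'w).
              b_complete_semimodule pl ml zK oK W wp sm wz \<longrightarrow>
              integral_operator pl ml V W wp sm A \<longrightarrow>
              b_linear V (vplus pl V) (fsm ml) W wp sm A))
       \<and> ((\<forall>(W :: ('x \<Rightarrow> 'k) set) wp sm wz (A :: ('x \<Rightarrow> 'k) \<Rightarrow> ('x \<Rightarrow> 'k)).
              b_complete_semimodule pl ml zK oK W wp sm wz \<longrightarrow>
              integral_operator pl ml V W wp sm A \<longrightarrow>
              b_linear V (vplus pl V) (fsm ml) W wp sm A)
           \<longrightarrow> functional_b_semimodule pl ml zK oK V)"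
proof (intro conjI impI allI)
  fix W :: "'w set" and wp sm wz and A :: "('x \<Rightarrow> 'k) \<Rightarrow> 'w"
  assume "functional_b_semimodule pl ml zK oK V" "b_complete_semimodule pl ml zK oK W wp sm wz"
    "integral_operator pl ml V W wp sm A"
  then show "b_linear V (vplus pl V) (fsm ml) W wp sm A"
    by (rule integral_operator_b_linear[OF assms(1)])
next
  assume all_b_linear: "\<forall>(W :: ('x \<Rightarrow> 'k) set) wp sm wz (A :: ('x \<Rightarrow> 'k) \<Rightarrow> ('x \<Rightarrow> 'k)).
    b_complete_semimodule pl ml zK oK W wp sm wz \<longrightarrow>
    integral_operator pl ml V W wp sm A \<longrightarrow> b_linear V (vplus pl V) (fsm ml) W wp sm A"
  have "idem_semiring pl ml zK oK" using assms(1) by (simp add: b_complete_semiring_def)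
  then have "integral_operator pl ml V UNIV (fplus pl) (fsm ml) (\<lambda>f. f)"
    by (rule embedding_integral_operator)
  then have "b_linear V (vplus pl V) (fsm ml) UNIV (fplus pl) (fsm ml) (\<lambda>f. f)"
    using all_b_linear fun_b_complete_semimodule[OF assms(1)] by blast
  then show "functional_b_semimodule pl ml zK oK V"
    using functional_b_semimodule_if_embedding_b_linear[OF assms(2)] by blast
qed

end
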